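(* Let $f,g:(0,\infty)\to\mathbb{R}$ be convex functions with $f(1)=g(1)=0$. (i) If $f(0)=\infty$ and $\liminf_{t\to0}\frac{g(t)}{f(t)}=\beta_0$, then for every $\beta>\beta_0$, \[ \sup_{P,Q}\bigl(\beta\, D_f(P,Q)-D_g(P,Q)\bigr)=\infty, \] the supremum being over all pairs of probability distributions $P,Q$ (on a common space). (ii) If $f^{\ast}(0)=\infty$ and $\liminf_{t\to\infty}\frac{g(t)}{f(t)}=\beta_0$, then for every $\beta>\beta_0$, $\sup_{P,Q}\bigl(\beta\, D_f(P,Q)-D_g(P,Q)\bigr)=\infty$.
   Context: For a convex function $f:(0,\infty)\to\mathbb{R}$ with $f(1)=0$, set $f(0)=\lim_{t\to0}f(t)$, $f^{\ast}(t)=tf(t^{-1})$ and $f^{\ast}(0)=\lim_{t\to\infty}f(t)/t$ (values in $(-\infty,\infty]$). If $P,Q$ are probability measures absolutely continuous with respect to a measure $\mu$ with densities $p=dP/d\mu$, $q=dQ/d\mu$, the $f$-divergence is $D_f(P,Q)=\int_{\{q>0\}} f(p/q)\,dQ+f^{\ast}(0)\,P(q=0)$. *)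

theory Defs
  imports "HOL-Analysis.Analysis"
begin

definition fzero :: "(real \<Rightarrow> real) \<Rightarrow> ereal" where
  "fzero f = Lim (at_right 0) (\<lambda>t. ereal (f t))"

definition fstar0 :: "(real \<Rightarrow> real) \<Rightarrow> ereal" where
  "fstar0 f = Lim at_top (\<lambda>t. ereal (f t / t))"

definition fext :: "(real \<Rightarrow> real) \<Rightarrow> real \<Rightarrow> ereal" where
  "fext f t = (if t > 0 then ereal (f t) else fzero f)"

definition density_pair :: "'a measure \<Rightarrow> ('a \<Rightarrow> real) \<Rightarrow> ('a \<Rightarrow> real) \<Rightarrow> bool" where
  "density_pair \<mu> p q \<longleftrightarrow>
     p \<in> borel_measurable \<mu> \<and> q \<in> borel_measurable \<mu> \<and>
     (\<forall>x. 0 \<le> p x) \<and> (\<forall>x. 0 \<le> q x) \<and>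
     (\<integral>\<^sup>+x. ennreal (p x) \<partial>\<mu>) = 1 \<and> (\<integral>\<^sup>+x. ennreal (q x) \<partial>\<mu>) = 1"

text \<open>D_f(P,Q) = int_{q>0} f(p/q) dQ + f*(0) P(q=0), where dQ = q d mu, dP = p d mu.
  The integral of the extended-real integrand is positive part minus negative part
  (the negative part is always finite for convex f).\<close>
definition fdiv :: "(real \<Rightarrow> real) \<Rightarrow> 'a measure \<Rightarrow> ('a \<Rightarrow> real) \<Rightarrow> ('a \<Rightarrow> real) \<Rightarrow> ereal" where
  "fdiv f \<mu> p q =
     (let h = (\<lambda>x. if q x > 0 then ereal (q x) * fext f (p x / q x) else 0)
      in enn2ereal (\<integral>\<^sup>+x. e2ennreal (h x) \<partial>\<mu>) - enn2ereal (\<integral>\<^sup>+x. e2ennreal (- h x) \<partial>\<mu>))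
     + fstar0 f * enn2ereal (\<integral>\<^sup>+x. ennreal (p x) * indicator {x. q x = 0} x \<partial>\<mu>)"

text \<open>sup over pairs (P,Q) of beta D_f(P,Q) - D_g(P,Q) is infinite (pairs with D_g = oo,
  where the difference is undefined or -oo, are excluded).\<close>
definition gap_unbounded :: "real \<Rightarrow> (real \<Rightarrow> real) \<Rightarrow> (real \<Rightarrow> real) \<Rightarrow> bool" where
  "gap_unbounded \<beta> f g \<longleftrightarrow>
     (\<forall>M::real. \<exists>(\<mu>::nat measure) p q. density_pair \<mu> p q \<and> fdiv g \<mu> p q < \<infinity> \<and>
        ereal M < ereal \<beta> * fdiv f \<mu> p q - fdiv g \<mu> p q)"

end

theory Submission
  imports Defs
begin

text \<open>Both parts are witnessed by two-point distributions, for which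
  \<open>\<beta> D\<^sub>f - D\<^sub>g = w (\<beta> f s - g s) + (1 - w) (\<beta> f u - g u)\<close> with \<open>Q = (w, 1 - w)\<close>, \<open>P = (w s, (1 - w) u)\<close>.
  Since \<open>g t < b f t\<close> for some \<open>b < \<beta>\<close> along a sequence \<open>t \<rightarrow> 0\<close> (resp. \<open>t \<rightarrow> \<infinity>\<close>), the first term
  is at least \<open>(\<beta> - b) w f t\<close>. In (i) take \<open>s = t\<close>, \<open>w = 1/2\<close>, so this is \<open>(\<beta> - b) f t / 2 \<rightarrow> \<infinity>\<close>;
  in (ii) take \<open>s = t\<close>, \<open>w = 1/(2t)\<close>, so it is \<open>(\<beta> - b) (f t / t) / 2 \<rightarrow> \<infinity>\<close>. In both cases \<open>u\<close> stays in a
  compact subinterval of \<open>(0, \<infinity>)\<close>, where the continuous function \<open>\<beta> f - g\<close> is bounded below.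
  The limits \<open>f(0)\<close> and \<open>f\<^sup>*(0)\<close> exist because the chord slopes of a convex function through
  the point 1 are monotone.\<close>

lemma antimono_tendsto_at_right_SUP:
  fixes h :: "real \<Rightarrow> 'a::{complete_linorder,linorder_topology}"
  assumes "a < c" and anti: "\<And>s t. a < s \<Longrightarrow> s \<le> t \<Longrightarrow> t < c \<Longrightarrow> h t \<le> h s"
  shows "(h \<longlongrightarrow> (SUP t\<in>{a<..<c}. h t)) (at_right a)"
proof (rule increasing_tendsto)
  show "\<forall>\<^sub>F t in at_right a. h t \<le> (SUP t\<in>{a<..<c}. h t)"
    unfolding eventually_at_right_field using \<open>a < c\<close> by (auto intro!: exI[of _ c] SUP_upper)
  fix y assume "y < (SUP t\<in>{a<..<c}. h t)"
  then obtain t0 where t0: "a < t0" "t0 < c" "y < h t0" by (auto simp: less_SUP_iff)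
  have "y < h t" if "a < t" "t < t0" for t
    using t0 that anti[of t t0] by (simp add: less_le_trans)
  with t0 show "\<forall>\<^sub>F t in at_right a. y < h t"
    unfolding eventually_at_right_field by blast
qed

lemma mono_tendsto_at_top_SUP:
  fixes h :: "real \<Rightarrow> 'a::{complete_linorder,linorder_topology}"
  assumes mono: "\<And>s t. c < s \<Longrightarrow> s \<le> t \<Longrightarrow> h s \<le> h t"
  shows "(h \<longlongrightarrow> (SUP t\<in>{c<..}. h t)) at_top"
proof (rule increasing_tendsto)
  show "\<forall>\<^sub>F t in at_top. h t \<le> (SUP t\<in>{c<..}. h t)"
    by (auto simp: eventually_gt_at_top intro: eventually_mono[OF eventually_gt_at_top[of c]] SUP_upper)
  fix y assume "y < (SUP t\<in>{c<..}. h t)"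
  then obtain t0 where t0: "c < t0" "y < h t0" by (auto simp: less_SUP_iff)
  have "y < h t" if "t0 \<le> t" for t
    using t0 that mono[of t0 t] by (simp add: less_le_trans)
  then show "\<forall>\<^sub>F t in at_top. y < h t"
    unfolding eventually_at_top_linorder by blast
qed

lemma convex_on_secant_slope_mono:
  fixes f :: "real \<Rightarrow> real"
  assumes f: "convex_on I f" and I: "a \<in> I" "s \<in> I" "t \<in> I"
    and "s < t" "s \<noteq> a" "t \<noteq> a"
  shows "(f s - f a) / (s - a) \<le> (f t - f a) / (t - a)"
proof -
  have swap: "(x - y) / (u - v) = (y - x) / (v - u)" for x y u v :: real
    by (metis minus_diff_eq minus_divide_divide)
  consider "t < a" | "s < a" "a < t" | "a < s"
    using assms by linarith
  then show ?thesis
  proof cases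
    case 1
    then show ?thesis
      using convex_on_slope_le(2)[OF f I(2,1) \<open>s < t\<close>] by simp
  next
    case 2
    have "(f s - f a) / (s - a) \<le> (f s - f t) / (s - t)"
      using convex_on_slope_le(1)[OF f I(2,3) 2] .
    also have "\<dots> \<le> (f a - f t) / (a - t)"
      using convex_on_slope_le(2)[OF f I(2,3) 2] .
    finally show ?thesis
      by (simp only: swap[of "f a"])
  next
    case 3
    then show ?thesis
      using convex_on_slope_le(1)[OF f I(1,3) 3 \<open>s < t\<close>] by (simp only: swap[of "f a"])
  qed
qed

lemma tendsto_fzero:
  fixes f :: "real \<Rightarrow> real"
  assumes f: "convex_on {0<..} f" and f1: "f 1 = 0"
  shows "((\<lambda>t. ereal (f t)) \<longlongrightarrow> fzero f) (at_right 0)"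
proof -
  have anti: "f t / (1 - t) \<le> f s / (1 - s)" if "0 < s" "s \<le> t" "t < 1" for s t
  proof (cases "s = t")
    case False
    have "(f s - f 1) / (s - 1) \<le> (f t - f 1) / (t - 1)"
      using that False by (intro convex_on_secant_slope_mono[OF f]) auto
    moreover have "x / (y - 1) = - (x / (1 - y))" for x y :: real
      by (metis minus_diff_eq divide_minus_right)
    ultimately show ?thesis using f1 by simp
  qed simp
  define L where "L = (SUP t\<in>{0<..<1::real}. ereal (f t / (1 - t)))"
  have "((\<lambda>t. ereal (f t / (1 - t))) \<longlongrightarrow> L) (at_right 0)"
    unfolding L_def by (rule antimono_tendsto_at_right_SUP) (use anti in auto)
  then have "((\<lambda>t. ereal (1 - t) * ereal (f t / (1 - t))) \<longlongrightarrow> ereal 1 * L) (at_right 0)"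
    by (intro tendsto_mult_ereal) (auto simp: lim_ereal intro!: tendsto_eq_intros)
  moreover have "\<forall>\<^sub>F t in at_right 0. ereal (1 - t) * ereal (f t / (1 - t)) = ereal (f t)"
    unfolding eventually_at_right_field by (intro exI[of _ 1]) auto
  ultimately have "((\<lambda>t. ereal (f t)) \<longlongrightarrow> L) (at_right 0)"
    using Lim_transform_eventually by fastforce
  then show ?thesis
    by (simp add: fzero_def tendsto_Lim)
qed

lemma tendsto_fstar0:
  fixes f :: "real \<Rightarrow> real"
  assumes f: "convex_on {0<..} f" and f1: "f 1 = 0"
  shows "((\<lambda>t. ereal (f t / t)) \<longlongrightarrow> fstar0 f) at_top"
proof -
  have mono: "f s / (s - 1) \<le> f t / (t - 1)" if "1 < s" "s \<le> t" for s t
    using convex_on_secant_slope_mono[OF f, of 1 s t] that f1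
    by (cases "s = t") auto
  define L where "L = (SUP t\<in>{1::real<..}. ereal (f t / (t - 1)))"
  have "((\<lambda>t. ereal (f t / (t - 1))) \<longlongrightarrow> L) at_top"
    unfolding L_def by (rule mono_tendsto_at_top_SUP) (use mono in auto)
  moreover have "((\<lambda>t. ereal (1 - 1 / t)) \<longlongrightarrow> ereal 1) at_top"
  proof -
    have "((\<lambda>t::real. 1 - inverse t) \<longlongrightarrow> 1 - 0) at_top"
      by (intro tendsto_diff tendsto_const tendsto_inverse_0_at_top filterlim_ident)
    then show ?thesis unfolding lim_ereal by (simp add: inverse_eq_divide)
  qed
  ultimately have "((\<lambda>t. ereal (1 - 1 / t) * ereal (f t / (t - 1))) \<longlongrightarrow> ereal 1 * L) at_top"
    by (intro tendsto_mult_ereal) auto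
  moreover have "\<forall>\<^sub>F t in at_top. ereal (1 - 1 / t) * ereal (f t / (t - 1)) = ereal (f t / t)"
    unfolding eventually_at_top_linorder by (intro exI[of _ 2]) (auto simp: field_simps)
  ultimately have "((\<lambda>t. ereal (f t / t)) \<longlongrightarrow> L) at_top"
    using Lim_transform_eventually by fastforce
  then show ?thesis
    by (simp add: fstar0_def tendsto_Lim)
qed

lemma fdiv_count_space_finite:
  fixes f :: "real \<Rightarrow> real" and A :: "'a set"
  assumes A: "finite A" and q: "\<And>x. x \<in> A \<Longrightarrow> q x > 0" and p: "\<And>x. x \<in> A \<Longrightarrow> p x > 0"
  shows "fdiv f (count_space A) p q = ereal (\<Sum>x\<in>A. q x * f (p x / q x))"
proof -
  define v where "v x = q x * f (p x / q x)" for x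
  have integrand: "(if q x > 0 then ereal (q x) * fext f (p x / q x) else 0) = ereal (v x)" if "x \<in> A" for x
    using q[OF that] p[OF that] by (simp add: fext_def v_def)
  have sum_ennreal_max: "(\<Sum>x\<in>A. ennreal (w x)) = ennreal (\<Sum>x\<in>A. max 0 (w x))" for w :: "'a \<Rightarrow> real"
  proof -
    have "(\<Sum>x\<in>A. ennreal (w x)) = (\<Sum>x\<in>A. ennreal (max 0 (w x)))"
      by (intro sum.cong) (auto simp: max_def ennreal_neg)
    also have "\<dots> = ennreal (\<Sum>x\<in>A. max 0 (w x))" by (rule sum_ennreal) simp
    finally show ?thesis .
  qed
  have pos_part: "(\<integral>\<^sup>+x. e2ennreal (if q x > 0 then ereal (q x) * fext f (p x / q x) else 0) \<partial>count_space A)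
     = ennreal (\<Sum>x\<in>A. max 0 (v x))"
    using A integrand by (simp add: nn_integral_count_space_finite sum_ennreal_max[symmetric] cong: sum.cong)
  have neg_part: "(\<integral>\<^sup>+x. e2ennreal (- (if q x > 0 then ereal (q x) * fext f (p x / q x) else 0)) \<partial>count_space A)
     = ennreal (\<Sum>x\<in>A. max 0 (- v x))"
    using A integrand by (simp add: nn_integral_count_space_finite sum_ennreal_max[symmetric] cong: sum.cong)
  have singular_part: "(\<integral>\<^sup>+x. ennreal (p x) * indicator {x. q x = 0} x \<partial>count_space A) = 0"
    using A q by (auto simp: nn_integral_count_space_finite intro!: sum.neutral) (metis less_irrefl)
  have parts_diff: "(\<Sum>x\<in>A. max 0 (v x)) - (\<Sum>x\<in>A. max 0 (- v x)) = (\<Sum>x\<in>A. v x)"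
    by (simp add: sum_subtractf[symmetric]) (intro sum.cong; simp add: max_def)
  show ?thesis
    unfolding fdiv_def Let_def pos_part neg_part singular_part using parts_diff
    by (simp add: sum_nonneg v_def zero_ennreal.rep_eq)
qed

lemma two_point_distribution_pair:
  fixes w s u :: real
  assumes "0 < w" "w < 1" "0 < s" "0 < u" "w * s + (1 - w) * u = 1"
  defines "p \<equiv> \<lambda>n::nat. if n = 0 then w * s else (1 - w) * u"
    and "q \<equiv> \<lambda>n::nat. if n = 0 then w else 1 - w"
  shows "density_pair (count_space {0,1}) p q"
    and "fdiv h (count_space {0,1}) p q = ereal (w * h s + (1 - w) * h u)"
proof -
  show "density_pair (count_space {0,1}) p q"
    unfolding density_pair_def using assms
    by (auto simp: nn_integral_count_space_finite p_def q_def ennreal_plus[symmetric]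
        simp del: ennreal_plus)
  show "fdiv h (count_space {0,1}) p q = ereal (w * h s + (1 - w) * h u)"
    by (subst fdiv_count_space_finite) (use assms in \<open>auto simp: p_def q_def\<close>)
qed

lemma gap_unbounded_two_pointI:
  assumes "\<And>M. \<exists>w s u. 0 < w \<and> w < 1 \<and> 0 < s \<and> 0 < u \<and> w * s + (1 - w) * u = 1 \<and>
              M < w * (\<beta> * f s - g s) + (1 - w) * (\<beta> * f u - g u)"
  shows "gap_unbounded \<beta> f g"
  unfolding gap_unbounded_def
proof
  fix M
  obtain w s u where wsu: "0 < w" "w < 1" "0 < s" "0 < u" "w * s + (1 - w) * u = 1"
    and gap: "M < w * (\<beta> * f s - g s) + (1 - w) * (\<beta> * f u - g u)"
    using assms by blast
  define p where "p = (\<lambda>n::nat. if n = 0 then w * s else (1 - w) * u)"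
  define q where "q = (\<lambda>n::nat. if n = 0 then w else 1 - w)"
  have pair: "density_pair (count_space {0,1}) p q"
    "\<And>h. fdiv h (count_space {0,1}) p q = ereal (w * h s + (1 - w) * h u)"
    unfolding p_def q_def by (rule two_point_distribution_pair[OF wsu])+
  have "ereal M < ereal \<beta> * fdiv f (count_space {0,1}) p q - fdiv g (count_space {0,1}) p q"
    using gap unfolding pair(2) by (simp add: algebra_simps)
  with pair show "\<exists>(\<mu>::nat measure) p q. density_pair \<mu> p q \<and> fdiv g \<mu> p q < \<infinity> \<and>
          ereal M < ereal \<beta> * fdiv f \<mu> p q - fdiv g \<mu> p q"
    by (intro exI[of _ "count_space {0,1}"] exI[of _ p] exI[of _ q]) simp
qed

lemma Liminf_less_frequently:
  fixes X :: "'a \<Rightarrow> real"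
  assumes "Liminf F (\<lambda>t. ereal (X t)) < ereal \<beta>"
  shows "\<exists>b<\<beta>. \<exists>\<^sub>F t in F. X t < b"
proof -
  obtain b where b: "Liminf F (\<lambda>t. ereal (X t)) < ereal b" "b < \<beta>"
    using ereal_dense2[OF assms] by auto
  have "\<not> (\<forall>\<^sub>F t in F. ereal b \<le> ereal (X t))"
  proof
    assume "\<forall>\<^sub>F t in F. ereal b \<le> ereal (X t)"
    then have "ereal b \<le> Liminf F (\<lambda>t. ereal (X t))"
      by (rule Liminf_bounded)
    with b(1) show False
      by simp
  qed
  with b(2) show ?thesis
    by (auto simp: not_eventually not_le)
qed

lemma frequently_gap_exceeds:
  fixes f g d :: "'a \<Rightarrow> real"
  assumes "Liminf F (\<lambda>t. ereal (g t / f t)) < ereal \<beta>"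
    and "((\<lambda>t. ereal (f t / d t)) \<longlongrightarrow> \<infinity>) F" and "\<forall>\<^sub>F t in F. 0 < d t"
  shows "\<exists>\<^sub>F t in F. K < (\<beta> * f t - g t) / d t"
proof -
  obtain b where b: "b < \<beta>" and freq: "\<exists>\<^sub>F t in F. g t / f t < b"
    using Liminf_less_frequently[OF assms(1)] by blast
  define c where "c = max 0 (K / (\<beta> - b))"
  have "\<forall>\<^sub>F t in F. ereal c < ereal (f t / d t)"
    using assms(2) by (simp add: tendsto_PInfty)
  with assms(3) have "\<forall>\<^sub>F t in F. c < f t / d t \<and> 0 < d t"
    by eventually_elim simp
  with freq have "\<exists>\<^sub>F t in F. g t / f t < b \<and> c < f t / d t \<and> 0 < d t"
    by (rule frequently_eventually_frequently)
  then show ?thesis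
  proof (rule frequently_elim1)
    fix t assume t: "g t / f t < b \<and> c < f t / d t \<and> 0 < d t"
    have "0 < f t / d t" "0 < d t"
      using t by (auto simp: c_def)
    then have "0 < f t"
      using mult_pos_pos[of "f t / d t" "d t"] by simp
    then have "g t < b * f t"
      using t by (simp add: divide_less_eq)
    have "K / (\<beta> - b) \<le> c"
      by (simp add: c_def)
    then have "K \<le> (\<beta> - b) * c"
      using b by (simp add: pos_divide_le_eq mult.commute)
    also have "\<dots> < (\<beta> - b) * (f t / d t)"
      using b t by (intro mult_strict_left_mono) auto
    also have "\<dots> = (\<beta> - b) * f t / d t"
      by simp
    also have "\<dots> \<le> (\<beta> * f t - g t) / d t"
      using \<open>g t < b * f t\<close> \<open>0 < d t\<close> by (intro divide_right_mono) (auto simp: algebra_simps)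
    finally show "K < (\<beta> * f t - g t) / d t" .
  qed
qed

lemma convex_on_scaled_diff_bdd_below:
  fixes f g :: "real \<Rightarrow> real"
  assumes "convex_on {0<..} f" "convex_on {0<..} g" "0 < a"
  shows "\<exists>B. \<forall>x\<in>{a..b}. B \<le> \<beta> * f x - g x"
proof -
  have "continuous_on {0<..} f" "continuous_on {0<..} g"
    using assms(1,2) by (simp_all add: convex_on_continuous)
  then have "continuous_on {a..b} (\<lambda>x. \<beta> * f x - g x)"
    using assms(3) by (intro continuous_intros; auto elim!: continuous_on_subset)
  then have "bdd_below ((\<lambda>x. \<beta> * f x - g x) ` {a..b})"
    by (intro bounded_imp_bdd_below compact_imp_bounded compact_continuous_image) auto
  then show ?thesis
    by (auto simp: bdd_below_def)
qed

lemma gap_unbounded_at_zero: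
  fixes f g :: "real \<Rightarrow> real"
  assumes "convex_on {0<..} f" "convex_on {0<..} g"
    and "((\<lambda>t. ereal (f t)) \<longlongrightarrow> \<infinity>) (at_right 0)"
    and "Liminf (at_right 0) (\<lambda>t. ereal (g t / f t)) < ereal \<beta>"
  shows "gap_unbounded \<beta> f g"
proof (rule gap_unbounded_two_pointI)
  fix M
  obtain B where B: "\<forall>x\<in>{1..2}. B \<le> \<beta> * f x - g x"
    using convex_on_scaled_diff_bdd_below[OF assms(1,2)] by fastforce
  have "\<exists>\<^sub>F t in at_right 0. 2 * M - B < (\<beta> * f t - g t) / 1"
    by (rule frequently_gap_exceeds) (use assms(3,4) in simp_all)
  moreover have "\<forall>\<^sub>F t in at_right (0::real). 0 < t \<and> t < 1"
    unfolding eventually_at_right_field by (intro exI[of _ 1]) auto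
  ultimately have "\<exists>\<^sub>F t in at_right 0. 2 * M - B < (\<beta> * f t - g t) / 1 \<and> 0 < t \<and> t < 1"
    by (rule frequently_eventually_frequently)
  then obtain t where t: "2 * M - B < \<beta> * f t - g t" "0 < t" "t < 1"
    by (auto dest: frequently_ex)
  have "B \<le> \<beta> * f (2 - t) - g (2 - t)"
    using B t by auto
  with t have gap: "M < 1/2 * (\<beta> * f t - g t) + (1 - 1/2) * (\<beta> * f (2 - t) - g (2 - t))"
    by (simp add: field_simps)
  show "\<exists>w s u. 0 < w \<and> w < 1 \<and> 0 < s \<and> 0 < u \<and> w * s + (1 - w) * u = 1 \<and>
                 M < w * (\<beta> * f s - g s) + (1 - w) * (\<beta> * f u - g u)"
    by (rule exI[of _ "1/2"], rule exI[of _ t], rule exI[of _ "2 - t"]) (use t gap in \<open>auto simp: field_simps\<close>)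
qed

lemma gap_unbounded_at_infinity:
  fixes f g :: "real \<Rightarrow> real"
  assumes "convex_on {0<..} f" "convex_on {0<..} g"
    and "((\<lambda>t. ereal (f t / t)) \<longlongrightarrow> \<infinity>) at_top"
    and "Liminf at_top (\<lambda>t. ereal (g t / f t)) < ereal \<beta>"
  shows "gap_unbounded \<beta> f g"
proof (rule gap_unbounded_two_pointI)
  fix M
  obtain B where B: "\<forall>x\<in>{1/2..1}. B \<le> \<beta> * f x - g x"
    using convex_on_scaled_diff_bdd_below[OF assms(1,2)] by fastforce
  have "\<exists>\<^sub>F t in at_top. 2 * (M + \<bar>B\<bar>) < (\<beta> * f t - g t) / t"
    by (rule frequently_gap_exceeds[OF assms(4,3)]) (simp add: eventually_gt_at_top)
  moreover have "\<forall>\<^sub>F t in at_top. (1::real) < t"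
    by (simp add: eventually_gt_at_top)
  ultimately have "\<exists>\<^sub>F t in at_top. 2 * (M + \<bar>B\<bar>) < (\<beta> * f t - g t) / t \<and> 1 < t"
    by (rule frequently_eventually_frequently)
  then obtain t where t: "2 * (M + \<bar>B\<bar>) < (\<beta> * f t - g t) / t" "1 < t"
    by (auto dest: frequently_ex)
  define w where "w = 1 / (2 * t)"
  define u where "u = (1/2) / (1 - w)"
  have w: "0 < w" "w < 1/2"
    using t(2) by (auto simp: w_def field_simps)
  have u: "1/2 \<le> u" "u \<le> 1" "w * t + (1 - w) * u = 1"
    using t(2) by (auto simp: u_def w_def field_simps)
  have "M + \<bar>B\<bar> < w * (\<beta> * f t - g t)"
    using t(1) by (simp add: w_def field_simps)
  moreover have "(1 - w) * B \<le> (1 - w) * (\<beta> * f u - g u)"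
    using B u w by (intro mult_left_mono) auto
  moreover have "\<bar>(1 - w) * B\<bar> \<le> \<bar>B\<bar>"
    using w unfolding abs_mult by (intro mult_left_le_one_le) auto
  ultimately have gap: "M < w * (\<beta> * f t - g t) + (1 - w) * (\<beta> * f u - g u)"
    by linarith
  show "\<exists>w s u. 0 < w \<and> w < 1 \<and> 0 < s \<and> 0 < u \<and> w * s + (1 - w) * u = 1 \<and>
          M < w * (\<beta> * f s - g s) + (1 - w) * (\<beta> * f u - g u)"
    by (rule exI[of _ w], rule exI[of _ t], rule exI[of _ u]) (use t(2) u w gap in auto)
qed

theorem lemma2:
  fixes f g :: "real \<Rightarrow> real" and \<beta> :: real
  assumes "convex_on {0<..} f" and "convex_on {0<..} g"
    and "f 1 = 0" and "g 1 = 0"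
  shows "(fzero f = \<infinity> \<and> Liminf (at_right 0) (\<lambda>t. ereal (g t / f t)) < ereal \<beta>
            \<longrightarrow> gap_unbounded \<beta> f g)
       \<and> (fstar0 f = \<infinity> \<and> Liminf at_top (\<lambda>t. ereal (g t / f t)) < ereal \<beta>
            \<longrightarrow> gap_unbounded \<beta> f g)"
proof (intro conjI impI; elim conjE)
  assume "fzero f = \<infinity>" and "Liminf (at_right 0) (\<lambda>t. ereal (g t / f t)) < ereal \<beta>"
  then show "gap_unbounded \<beta> f g"
    using gap_unbounded_at_zero[OF assms(1,2)] tendsto_fzero[OF assms(1,3)] by simp
next
  assume "fstar0 f = \<infinity>" and "Liminf at_top (\<lambda>t. ereal (g t / f t)) < ereal \<beta>"
  then show "gap_unbounded \<beta> f g"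
    using gap_unbounded_at_infinity[OF assms(1,2)] tendsto_fstar0[OF assms(1,3)] by simp
qed

end
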